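(* Let $N$ be a lattice of finite rank with basis $\{e_i\}_{i\in I}$, $F\subset I$, $\omega$ a $\mathbb{Q}$-valued skew-symmetric form on $N$ with $\omega(e_i,e_j)\in\mathbb{Z}$ whenever $i\notin F$ or $j\notin F$, $M=\mathrm{Hom}(N,\mathbb{Z})$, $\omega_1:N\to M_{\mathbb{Q}}$, $n\mapsto\omega(n,\cdot)$, and let $\Lambda$ be a $\mathbb{Q}$-valued skew-symmetric form on $M$ such that $\Lambda(\cdot,\omega_1(e_i))=d\,e_i$ (as elements of $N_{\mathbb{Q}}$) for all $i\in I\setminus F$, for a fixed $d\in\mathbb{Q}_{>0}$. Let $M^+$ be the set of nonzero elements of the $\mathbb{Z}_{\geq0}$-span of $\{\omega_1(e_i): i\in I\setminus F\}$, and for $m\in M^+$ let $|m|$ be the largest positive integer $k$ with $\frac1k m\in M^+$. Let $\Bbbk$ be a commutative ring containing $\mathbb{Z}$ and $\Bbbk_t=\Bbbk[t^{\pm1/D}]$ with $D$ a positive integer such that $\Lambda$ and $\omega$ are $\frac1D\mathbb{Z}$-valued. Then for any $a,b\in M^+$, $$\frac{(t^{d|a+b|}-t^{-d|a+b|})(t^{\Lambda(a,b)}-t^{-\Lambda(a,b)})}{(t^{d|a|}-t^{-d|a|})(t^{d|b|}-t^{-d|b|})}\in\Bbbk_t.$$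
   Context: All notation is introduced in the statement; the fraction is a priori an element of the fraction field of $\Bbbk_t$. *)

theory Defs
  imports Complex_Main "HOL-Computational_Algebra.Formal_Laurent_Series"
begin

text \<open>Lattice N = Z^I with basis e_i (I a finite index type 'i); M = Hom(N,Z) in dual
 coordinates. A skew form on N is given by its Gram matrix w i j = omega(e_i,e_j);
 a skew form on M by L j k = Lambda(e_j^*, e_k^*). omega_1(e_i) has dual coordinates
 (w i k)_k.\<close>

definition omega1 :: "('i \<Rightarrow> 'i \<Rightarrow> rat) \<Rightarrow> 'i \<Rightarrow> ('i \<Rightarrow> rat)" where
  "omega1 w i = (\<lambda>k. w i k)"

definition formM :: "('i::finite \<Rightarrow> 'i \<Rightarrow> rat) \<Rightarrow> ('i \<Rightarrow> rat) \<Rightarrow> ('i \<Rightarrow> rat) \<Rightarrow> rat" where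
  "formM L m m' = (\<Sum>j\<in>UNIV. \<Sum>k\<in>UNIV. m j * m' k * L j k)"

definition Mplus :: "('i::finite \<Rightarrow> 'i \<Rightarrow> rat) \<Rightarrow> 'i set \<Rightarrow> ('i \<Rightarrow> rat) set" where
  "Mplus w F = {m. m \<noteq> (\<lambda>_. 0) \<and> (\<exists>c :: 'i \<Rightarrow> nat.
      m = (\<lambda>k. \<Sum>i\<in>UNIV - F. of_nat (c i) * omega1 w i k))}"

definition absM :: "('i::finite \<Rightarrow> 'i \<Rightarrow> rat) \<Rightarrow> 'i set \<Rightarrow> ('i \<Rightarrow> rat) \<Rightarrow> nat" where
  "absM w F m = (GREATEST k::nat. 0 < k \<and> (\<lambda>j. m j / of_nat k) \<in> Mplus w F)"

text \<open>k_t = k[t^{\<plusminus>1/D}] realised as Laurent polynomials in s = t^{1/D}: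
 formal Laurent series with finitely many nonzero coefficients.\<close>
definition kt :: "'a::comm_ring_1 fls set" where
  "kt = {f. finite {n. fls_nth f n \<noteq> 0}}"

text \<open>t^x for x in (1/D)Z, i.e. s^(D x).\<close>
definition tpow :: "nat \<Rightarrow> rat \<Rightarrow> 'a::comm_ring_1 fls" where
  "tpow D x = fls_X_intpow \<lfloor>of_nat D * x\<rfloor>"

end

theory Submission
  imports Defs "HOL-Computational_Algebra.Polynomial_FPS"
begin

text \<open>
  Write a and b as non-negative integer combinations, with coefficient vectors c and c', of the
  vectors omega_1(e_i), i not in F. The compatibility of Lambda with omega lets one read the
  coefficients off a vector, so |a| = gcd c, |b| = gcd c' and |a + b| = gcd (c + c'); moreover
  Lambda(a, b) = d l with l = sum c_i c'_j omega(e_i, e_j), an integer divisible by |a| |b|.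
  With x = t^(2d) one has t^(dn) - t^(-dn) = t^(-dn) (x^n - 1), so it suffices that
  (x^|a| - 1)(x^|b| - 1) divides (x^|a+b| - 1)(x^|l| - 1) in Z[x]. This follows from
  gcd(|a|, |b|) dividing |a + b|, lcm(|a|, |b|) dividing l, and the divisibility of
  (x^(gcd m n) - 1)(x^(lcm m n) - 1) by (x^m - 1)(x^n - 1). For coprime m, n the latter holds
  because the geometric sums 1 + ... + x^(m-1) and 1 + ... + x^(n-1) generate the unit ideal
  (run the Euclidean algorithm on the exponents) and both divide 1 + ... + x^(mn-1).
\<close>

lemma geometric_sum_add:
  fixes x :: "'a::comm_ring_1"
  shows "(\<Sum>i<m + n. x ^ i) = (\<Sum>i<m. x ^ i) + x ^ m * (\<Sum>i<n. x ^ i)"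
  by (induction n) (simp_all add: algebra_simps power_add)

lemma geometric_sum_mult:
  fixes x :: "'a::comm_ring_1"
  shows "(\<Sum>i<k * n. x ^ i) = (\<Sum>i<n. x ^ i) * (\<Sum>j<k. x ^ (n * j))"
proof (induction k)
  case (Suc k)
  have "(\<Sum>i<Suc k * n. x ^ i) = (\<Sum>i<k * n. x ^ i) + x ^ (k * n) * (\<Sum>i<n. x ^ i)"
    by (metis geometric_sum_add add.commute mult_Suc)
  with Suc show ?case by (simp add: algebra_simps mult.commute)
qed simp

lemma geometric_sum_bezout:
  fixes x :: "'a::comm_ring_1"
  shows "\<exists>A B. A * (\<Sum>i<m. x ^ i) + B * (\<Sum>i<n. x ^ i) = (\<Sum>i<gcd m n. x ^ i)"
proof (induction m n rule: gcd_nat_induct)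
  case (base m)
  show ?case by (rule exI[of _ 1], rule exI[of _ 0]) simp
next
  case (step m n)
  from step(2) obtain A B
    where AB: "A * (\<Sum>i<n. x ^ i) + B * (\<Sum>i<m mod n. x ^ i) = (\<Sum>i<gcd n (m mod n). x ^ i)"
    by blast
  define Q where "Q = (\<Sum>j<m div n. x ^ (n * j))"
  have m: "m = m mod n + m div n * n" by simp
  have "(\<Sum>i<m. x ^ i) = (\<Sum>i<m mod n. x ^ i) + x ^ (m mod n) * ((\<Sum>i<n. x ^ i) * Q)"
    unfolding Q_def by (subst m, subst geometric_sum_add, subst geometric_sum_mult) simp
  then have "B * (\<Sum>i<m. x ^ i) + (A - B * x ^ (m mod n) * Q) * (\<Sum>i<n. x ^ i) = (\<Sum>i<gcd m n. x ^ i)"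
    using AB gcd_non_0_nat[of n m] step(1) by (simp add: algebra_simps)
  then show ?case by blast
qed

lemma geometric_sum_coprime_mult_dvd:
  fixes x :: "'a::comm_ring_1" and p q :: nat
  assumes "coprime p q"
  shows "(\<Sum>i<p. x ^ i) * (\<Sum>i<q. x ^ i) dvd (\<Sum>i<p * q. x ^ i)"
proof -
  obtain A B where AB: "A * (\<Sum>i<p. x ^ i) + B * (\<Sum>i<q. x ^ i) = 1"
    using geometric_sum_bezout[of x p q] assms by auto
  have "(\<Sum>i<p * q. x ^ i) = (\<Sum>i<p * q. x ^ i) * (A * (\<Sum>i<p. x ^ i) + B * (\<Sum>i<q. x ^ i))"
    by (simp add: AB)
  also have "\<dots> = (\<Sum>i<p. x ^ i) * (\<Sum>i<q. x ^ i)
      * (A * (\<Sum>j<p. x ^ (q * j)) + B * (\<Sum>j<q. x ^ (p * j)))"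
    using geometric_sum_mult[where k=q and n=p and x=x] geometric_sum_mult[where k=p and n=q and x=x]
    by (simp add: algebra_simps mult.commute[of q p])
  finally show ?thesis by (rule dvdI)
qed

lemma power_diff_1_dvd:
  fixes x :: "'a::comm_ring_1"
  assumes "m dvd n"
  shows "x ^ m - 1 dvd x ^ n - 1"
proof -
  obtain k where "n = m * k" using assms by blast
  then have "x ^ n - 1 = (x ^ m) ^ k - 1" by (simp add: power_mult)
  also have "\<dots> = (x ^ m - 1) * (\<Sum>i<k. (x ^ m) ^ i)" by (rule power_diff_1_eq)
  finally show ?thesis by (rule dvdI)
qed

lemma power_diff_1_coprime_mult_dvd:
  fixes x :: "'a::comm_ring_1" and p q :: nat
  assumes "coprime p q"
  shows "(x ^ p - 1) * (x ^ q - 1) dvd (x - 1) * (x ^ (p * q) - 1)"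
proof -
  have "(x - 1) * (\<Sum>i<p. x ^ i) * ((x - 1) * (\<Sum>i<q. x ^ i))
      dvd (x - 1) * ((x - 1) * (\<Sum>i<p * q. x ^ i))"
    using mult_dvd_mono[OF dvd_refl[of "(x - 1) * (x - 1)"] geometric_sum_coprime_mult_dvd[OF assms, of x]]
    by (simp only: mult_ac)
  then show ?thesis by (simp only: power_diff_1_eq)
qed

lemma power_diff_1_mult_dvd_gcd_lcm:
  fixes x :: "'a::comm_ring_1"
  shows "(x ^ m - 1) * (x ^ n - 1) dvd (x ^ gcd m n - 1) * (x ^ lcm m n - 1)"
proof (cases "m = 0 \<or> n = 0")
  case False
  define g where "g = gcd m n"
  obtain p q where m: "m = g * p" and n: "n = g * q" and "coprime p q"
    using gcd_coprime_exists[of m n] False unfolding g_def by (auto simp: mult.commute)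
  have "lcm m n = g * (p * q)"
    unfolding m n using \<open>coprime p q\<close> by (simp add: lcm_mult_left lcm_coprime)
  have "((x ^ g) ^ p - 1) * ((x ^ g) ^ q - 1) dvd (x ^ g - 1) * ((x ^ g) ^ (p * q) - 1)"
    by (rule power_diff_1_coprime_mult_dvd) fact
  then show ?thesis
    unfolding g_def[symmetric] \<open>lcm m n = g * (p * q)\<close> by (simp add: m n power_mult)
next
  case True
  then show ?thesis by (elim disjE) simp_all
qed

lemma Gcd_mult_dvd_bilinear_sum:
  fixes f g :: "'i \<Rightarrow> nat" and W :: "'i \<Rightarrow> 'i \<Rightarrow> int"
  shows "int (Gcd (f ` S) * Gcd (g ` S)) dvd (\<Sum>j\<in>S. \<Sum>i\<in>S. int (f i) * int (g j) * W i j)"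
proof (intro dvd_sum)
  fix i j assume "i \<in> S" "j \<in> S"
  then have "Gcd (f ` S) * Gcd (g ` S) dvd f i * g j" by (simp add: mult_dvd_mono)
  then show "int (Gcd (f ` S) * Gcd (g ` S)) dvd int (f i) * int (g j) * W i j"
    by (simp add: dvd_mult2 flip: of_nat_mult)
qed

lemma gcd_Gcd_dvd_Gcd_add:
  fixes f g :: "'i \<Rightarrow> nat"
  shows "gcd (Gcd (f ` S)) (Gcd (g ` S)) dvd Gcd ((\<lambda>i. f i + g i) ` S)"
proof (rule Gcd_greatest, clarify)
  fix i assume "i \<in> S"
  then have "gcd (Gcd (f ` S)) (Gcd (g ` S)) dvd f i" "gcd (Gcd (f ` S)) (Gcd (g ` S)) dvd g i"
    by (meson Gcd_dvd dvd_trans gcd_dvd1 gcd_dvd2 imageI)+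
  then show "gcd (Gcd (f ` S)) (Gcd (g ` S)) dvd f i + g i" by simp
qed

definition fls_of_poly :: "'a::comm_ring_1 poly \<Rightarrow> 'a fls" where
  "fls_of_poly p = fps_to_fls (fps_of_poly p)"

lemma fls_of_poly_mult: "fls_of_poly (p * q) = fls_of_poly p * fls_of_poly q"
  by (simp add: fls_of_poly_def fps_of_poly_mult fls_times_fps_to_fls)

lemma fls_of_poly_diff: "fls_of_poly (p - q) = fls_of_poly p - fls_of_poly q"
  by (simp add: fls_of_poly_def fps_of_poly_diff)

lemma fls_of_poly_1: "fls_of_poly 1 = 1"
  by (simp add: fls_of_poly_def)

lemma fls_of_poly_power: "fls_of_poly (p ^ n) = fls_of_poly p ^ n"
  by (simp add: fls_of_poly_def fps_of_poly_power fps_to_fls_power)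

lemma fls_of_poly_monom_1: "fls_of_poly (monom 1 n) = fls_X_intpow (int n)"
  by (simp add: fls_of_poly_def fps_of_poly_monom' fps_to_fls_power fls_X_power_conv_shift_1)

lemma fls_X_intpow_mult_fls_of_poly_in_kt: "fls_X_intpow e * fls_of_poly p \<in> kt"
proof -
  have "{n. fls_nth (fls_X_intpow e * fls_of_poly p) n \<noteq> 0} \<subseteq> (\<lambda>k. k + e) ` {0..int (degree p)}"
  proof
    fix n assume "n \<in> {n. fls_nth (fls_X_intpow e * fls_of_poly p) n \<noteq> 0}"
    then have "0 \<le> n - e" "coeff p (nat (n - e)) \<noteq> 0"
      by (auto simp: fls_X_intpow_times_conv_shift fls_of_poly_def split: if_splits)
    then have "n - e \<in> {0..int (degree p)}" using le_degree by fastforce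
    then show "n \<in> (\<lambda>k. k + e) ` {0..int (degree p)}" by (auto intro: image_eqI[of _ _ "n - e"])
  qed
  then show ?thesis unfolding kt_def by (auto intro: finite_subset)
qed

lemma uminus_in_kt: "q \<in> kt \<Longrightarrow> - q \<in> kt"
  by (simp add: kt_def)

text \<open>In the variable s = t^(1/D) of kt, fls_X_sym_diff k is t^(k/D) - t^(-k/D).\<close>

definition fls_X_sym_diff :: "int \<Rightarrow> 'a::comm_ring_1 fls" where
  "fls_X_sym_diff k = fls_X_intpow k - fls_X_intpow (- k)"

lemma fls_X_sym_diff_uminus: "fls_X_sym_diff (- k) = - fls_X_sym_diff k"
  by (simp add: fls_X_sym_diff_def)

lemma fls_X_sym_diff_eq_fls_of_poly:
  "fls_X_sym_diff (int u * int n)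
     = fls_X_intpow (- (int u * int n)) * fls_of_poly (monom (1::'a::comm_ring_1) (2 * u) ^ n - 1)"
proof -
  have "fls_of_poly (monom (1::'a) (2 * u) ^ n - 1) = fls_X_intpow (2 * (int u * int n)) - 1"
    by (simp add: fls_of_poly_diff fls_of_poly_power fls_of_poly_monom_1 fls_of_poly_1
        fls_X_intpow_power algebra_simps)
  moreover have "fls_X_intpow (- (int u * int n)) * fls_X_intpow (2 * (int u * int n))
      = (fls_X_intpow (int u * int n) :: 'a fls)"
    by (subst fls_X_intpow_times_fls_X_intpow) (simp add: mult.commute)
  ultimately show ?thesis by (simp add: fls_X_sym_diff_def right_diff_distrib)
qed

lemma fls_X_sym_diff_quotient_nat:
  assumes "gcd m n dvd G" and "m * n dvd N"
  shows "\<exists>q \<in> kt. q * (fls_X_sym_diff (int u * int m) * fls_X_sym_diff (int u * int n))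
           = fls_X_sym_diff (int u * int G) * (fls_X_sym_diff (int u * int N) :: 'a::comm_ring_1 fls)"
proof -
  let ?x = "monom (1::'a) (2 * u)"
  have "lcm m n dvd N" using assms(2) by (meson dvd_trans dvd_triv_left dvd_triv_right lcm_least)
  then have "(?x ^ gcd m n - 1) * (?x ^ lcm m n - 1) dvd (?x ^ G - 1) * (?x ^ N - 1)"
    using assms(1) by (intro mult_dvd_mono power_diff_1_dvd)
  with power_diff_1_mult_dvd_gcd_lcm have "(?x ^ m - 1) * (?x ^ n - 1) dvd (?x ^ G - 1) * (?x ^ N - 1)"
    by (rule dvd_trans)
  then obtain c where c: "(?x ^ G - 1) * (?x ^ N - 1) = (?x ^ m - 1) * (?x ^ n - 1) * c"
    by (elim dvdE)
  define e where "e = int u * int m + int u * int n - int u * int G - int u * int N"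
  have X_powers: "fls_X_intpow e * fls_X_intpow (- (int u * int m)) * fls_X_intpow (- (int u * int n))
      = fls_X_intpow (- (int u * int G)) * (fls_X_intpow (- (int u * int N)) :: 'a fls)"
    by (simp add: fls_times_both_shifted_simp e_def algebra_simps)
  have "fls_X_intpow e * fls_of_poly c * (fls_X_sym_diff (int u * int m) * fls_X_sym_diff (int u * int n))
      = (fls_X_intpow e * fls_X_intpow (- (int u * int m)) * fls_X_intpow (- (int u * int n)))
        * fls_of_poly ((?x ^ m - 1) * (?x ^ n - 1) * c)"
    unfolding fls_X_sym_diff_eq_fls_of_poly[of u m] fls_X_sym_diff_eq_fls_of_poly[of u n] fls_of_poly_mult
    by (simp only: mult_ac)
  also have "\<dots> = fls_X_sym_diff (int u * int G) * fls_X_sym_diff (int u * int N)"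
    unfolding X_powers c[symmetric] fls_X_sym_diff_eq_fls_of_poly[of u G]
      fls_X_sym_diff_eq_fls_of_poly[of u N] fls_of_poly_mult
    by (simp only: mult_ac)
  finally show ?thesis using fls_X_intpow_mult_fls_of_poly_in_kt by blast
qed

lemma fls_X_sym_diff_quotient:
  assumes "gcd m n dvd G" and "int (m * n) dvd l"
  shows "\<exists>q \<in> kt. q * (fls_X_sym_diff (int u * int m) * fls_X_sym_diff (int u * int n))
           = fls_X_sym_diff (int u * int G) * (fls_X_sym_diff (int u * l) :: 'a::comm_ring_1 fls)"
proof -
  have "m * n dvd nat \<bar>l\<bar>" using assms(2) by (simp add: nat_dvd_iff)
  from fls_X_sym_diff_quotient_nat[OF assms(1) this] obtain q where "q \<in> kt"
    and q: "q * (fls_X_sym_diff (int u * int m) * fls_X_sym_diff (int u * int n))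
           = fls_X_sym_diff (int u * int G) * (fls_X_sym_diff (int u * int (nat \<bar>l\<bar>)) :: 'a fls)"
    by blast
  show ?thesis
  proof (cases "0 \<le> l")
    case True
    with q \<open>q \<in> kt\<close> show ?thesis by auto
  next
    case False
    then have "int u * l = - (int u * int (nat \<bar>l\<bar>))" by simp
    with q uminus_in_kt[OF \<open>q \<in> kt\<close>] show ?thesis
      by (intro bexI[of _ "- q"]) (simp_all add: fls_X_sym_diff_uminus)
  qed
qed

lemma tpow_sym_diff:
  assumes "of_nat D * d = of_int U"
  shows "tpow D (d * of_int k) - tpow D (- d * of_int k) = fls_X_sym_diff (U * k)"
proof -
  have "of_nat D * (d * of_int k) = of_int (U * k)" "of_nat D * (- d * of_int k) = of_int (- (U * k))"
    using assms by (simp_all add: mult.assoc[symmetric])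
  then show ?thesis unfolding tpow_def fls_X_sym_diff_def by (simp only: floor_of_int)
qed

definition omega_comb :: "('i::finite \<Rightarrow> 'i \<Rightarrow> rat) \<Rightarrow> 'i set \<Rightarrow> ('i \<Rightarrow> rat) \<Rightarrow> 'i \<Rightarrow> rat" where
  "omega_comb w F r = (\<lambda>k. \<Sum>i\<in>UNIV - F. r i * omega1 w i k)"

lemma omega_comb_add: "(\<lambda>k. omega_comb w F r k + omega_comb w F s k) = omega_comb w F (\<lambda>i. r i + s i)"
  by (simp add: omega_comb_def sum.distrib distrib_right)

lemma omega_comb_divide: "(\<lambda>k. omega_comb w F r k / c) = omega_comb w F (\<lambda>i. r i / c)"
  by (simp add: omega_comb_def sum_divide_distrib)

lemma Mplus_iff:
  "m \<in> Mplus w F \<longleftrightarrow> m \<noteq> (\<lambda>_. 0) \<and> (\<exists>c. m = omega_comb w F (\<lambda>i. of_nat (c i)))"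
  by (simp add: Mplus_def omega_comb_def)

locale compatible_pair =
  fixes w L :: "'i::finite \<Rightarrow> 'i \<Rightarrow> rat" and F :: "'i set" and d :: rat
  assumes d_pos: "0 < d"
    and L_compat: "\<forall>i \<in> UNIV - F. \<forall>j. (\<Sum>k\<in>UNIV. L j k * omega1 w i k) = d * (if j = i then 1 else 0)"
begin

lemma L_omega_comb:
  "(\<Sum>k\<in>UNIV. L j k * omega_comb w F r k) = (if j \<in> UNIV - F then d * r j else 0)"
proof -
  have "(\<Sum>k\<in>UNIV. L j k * omega_comb w F r k) = (\<Sum>i\<in>UNIV - F. r i * (\<Sum>k\<in>UNIV. L j k * omega1 w i k))"
    unfolding omega_comb_def sum_distrib_left by (subst sum.swap) (simp add: mult_ac)
  also have "\<dots> = (\<Sum>i\<in>UNIV - F. if i = j then d * r j else 0)"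
    using L_compat by (intro sum.cong) auto
  also have "\<dots> = (if j \<in> UNIV - F then d * r j else 0)"
    by simp
  finally show ?thesis .
qed

lemma omega_comb_coeff_eq:
  assumes "omega_comb w F r = omega_comb w F s" and "j \<notin> F"
  shows "r j = s j"
  using L_omega_comb[of j r] L_omega_comb[of j s] assms d_pos by simp

lemma omega_comb_eq_0_iff: "omega_comb w F r = (\<lambda>_. 0) \<longleftrightarrow> (\<forall>i \<in> UNIV - F. r i = 0)"
proof
  assume "omega_comb w F r = (\<lambda>_. 0)"
  then have "omega_comb w F r = omega_comb w F (\<lambda>_. 0)" by (simp add: omega_comb_def)
  then show "\<forall>i \<in> UNIV - F. r i = 0" using omega_comb_coeff_eq by auto
qed (simp add: omega_comb_def)

lemma omega_comb_divide_in_Mplus_iff: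
  assumes "\<exists>i \<in> UNIV - F. c i \<noteq> 0" and "0 < k"
  shows "(\<lambda>j. omega_comb w F (\<lambda>i. of_nat (c i)) j / of_nat k) \<in> Mplus w F
    \<longleftrightarrow> k dvd Gcd (c ` (UNIV - F))"
proof
  assume "(\<lambda>j. omega_comb w F (\<lambda>i. of_nat (c i)) j / of_nat k) \<in> Mplus w F"
  then obtain c' where c': "omega_comb w F (\<lambda>i. of_nat (c i) / of_nat k) = omega_comb w F (\<lambda>i. of_nat (c' i))"
    by (auto simp: Mplus_iff omega_comb_divide)
  have "c i = c' i * k" if "i \<notin> F" for i
  proof -
    have "of_nat (c i) / of_nat k = (of_nat (c' i) :: rat)"
      using omega_comb_coeff_eq[OF c' that] by simp
    then have "(of_nat (c i) :: rat) = of_nat (c' i * k)" using \<open>0 < k\<close> by (simp add: field_simps)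
    then show ?thesis by (simp only: of_nat_eq_iff)
  qed
  then show "k dvd Gcd (c ` (UNIV - F))" by (auto intro!: Gcd_greatest)
next
  assume "k dvd Gcd (c ` (UNIV - F))"
  then have "k dvd c i" if "i \<notin> F" for i
    using that Gcd_dvd[of "c i" "c ` (UNIV - F)"] by (blast intro: dvd_trans)
  then have "c i = c i div k * k" if "i \<notin> F" for i
    using that by simp
  then have "omega_comb w F (\<lambda>i. of_nat (c i) / of_nat k) = omega_comb w F (\<lambda>i. of_nat (c i div k))"
    using \<open>0 < k\<close> unfolding omega_comb_def
    by (intro ext sum.cong) (auto simp: field_simps simp flip: of_nat_mult)
  moreover have "omega_comb w F (\<lambda>i. of_nat (c i) / of_nat k) \<noteq> (\<lambda>_. 0)"
    using assms by (auto simp: omega_comb_eq_0_iff)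
  ultimately show "(\<lambda>j. omega_comb w F (\<lambda>i. of_nat (c i)) j / of_nat k) \<in> Mplus w F"
    unfolding Mplus_iff omega_comb_divide by metis
qed

lemma absM_omega_comb:
  assumes "\<exists>i \<in> UNIV - F. c i \<noteq> 0"
  shows "absM w F (omega_comb w F (\<lambda>i. of_nat (c i))) = Gcd (c ` (UNIV - F))"
proof -
  let ?m = "omega_comb w F (\<lambda>i. of_nat (c i))" and ?g = "Gcd (c ` (UNIV - F))"
  have "?g \<noteq> 0" using assms by auto
  then have "0 < ?g" by (simp only: neq0_conv)
  show ?thesis unfolding absM_def
  proof (rule Greatest_equality)
    show "0 < ?g \<and> (\<lambda>j. ?m j / of_nat ?g) \<in> Mplus w F"
      using omega_comb_divide_in_Mplus_iff[OF assms \<open>0 < ?g\<close>] \<open>0 < ?g\<close> by simp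
    show "k \<le> ?g" if "0 < k \<and> (\<lambda>j. ?m j / of_nat k) \<in> Mplus w F" for k
      using that omega_comb_divide_in_Mplus_iff[OF assms, of k] \<open>0 < ?g\<close> by (simp add: dvd_imp_le)
  qed
qed

lemma formM_omega_comb:
  "formM L m (omega_comb w F r) = d * (\<Sum>j\<in>UNIV - F. m j * r j)"
proof -
  have "formM L m (omega_comb w F r) = (\<Sum>j\<in>UNIV. m j * (\<Sum>k\<in>UNIV. L j k * omega_comb w F r k))"
    unfolding formM_def by (simp add: sum_distrib_left mult_ac)
  also have "\<dots> = (\<Sum>j\<in>UNIV. if j \<in> UNIV - F then d * (m j * r j) else 0)"
    by (intro sum.cong) (simp_all add: L_omega_comb)
  also have "\<dots> = (\<Sum>j\<in>UNIV \<inter> (UNIV - F). d * (m j * r j))"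
    by (rule sum.inter_restrict[symmetric]) simp
  also have "\<dots> = d * (\<Sum>j\<in>UNIV - F. m j * r j)"
    by (simp add: sum_distrib_left)
  finally show ?thesis .
qed

lemma Mplus_eq:
  "m \<in> Mplus w F \<longleftrightarrow> (\<exists>c. m = omega_comb w F (\<lambda>i. of_nat (c i)) \<and> (\<exists>i \<in> UNIV - F. c i \<noteq> 0))"
  by (auto simp: Mplus_iff omega_comb_eq_0_iff)

lemma formM_omega_comb_of_nat:
  assumes w_int: "\<forall>i j. (i \<notin> F \<or> j \<notin> F) \<longrightarrow> w i j \<in> \<int>"
  shows "formM L (omega_comb w F (\<lambda>i. of_nat (ca i))) (omega_comb w F (\<lambda>i. of_nat (cb i)))
    = d * of_int (\<Sum>j\<in>UNIV - F. \<Sum>i\<in>UNIV - F. int (ca i) * int (cb j) * \<lfloor>w i j\<rfloor>)"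
proof -
  have w_floor: "of_int \<lfloor>w i j\<rfloor> = w i j" if "i \<notin> F" for i j
    using w_int that by (auto elim!: Ints_cases)
  show ?thesis
    unfolding formM_omega_comb
    by (simp add: omega_comb_def omega1_def sum_distrib_left sum_distrib_right w_floor mult_ac)
qed

lemma of_nat_mult_d_in_Ints:
  assumes w_int: "\<forall>i j. (i \<notin> F \<or> j \<notin> F) \<longrightarrow> w i j \<in> \<int>"
    and L_D: "\<forall>i j. of_nat D * L i j \<in> \<int>"
    and "i \<notin> F"
  shows "of_nat D * d \<in> \<int>"
proof -
  have "d = (\<Sum>k\<in>UNIV. L i k * omega1 w i k)"
    using L_compat \<open>i \<notin> F\<close> by simp
  then have "of_nat D * d = (\<Sum>k\<in>UNIV. (of_nat D * L i k) * w i k)"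
    by (simp add: omega1_def sum_distrib_left mult_ac)
  also have "\<dots> \<in> \<int>"
  proof (rule Ints_sum)
    fix k
    have "of_nat D * L i k \<in> \<int>" "w i k \<in> \<int>" using L_D w_int \<open>i \<notin> F\<close> by auto
    then show "of_nat D * L i k * w i k \<in> \<int>" by (rule Ints_mult)
  qed
  finally show ?thesis .
qed

lemma tpow_d_sym_diffE:
  assumes w_int: "\<forall>i j. (i \<notin> F \<or> j \<notin> F) \<longrightarrow> w i j \<in> \<int>"
    and L_D: "\<forall>i j. of_nat D * L i j \<in> \<int>"
    and "0 < D" and "i \<notin> F"
  obtains u :: nat
    where "\<And>k. tpow D (d * of_int k) - tpow D (- d * of_int k) = fls_X_sym_diff (int u * k)"
proof -
  obtain U where U: "of_nat D * d = of_int U"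
    using of_nat_mult_d_in_Ints[OF w_int L_D \<open>i \<notin> F\<close>] by (auto elim!: Ints_cases)
  then have "0 < U" using \<open>0 < D\<close> d_pos by (metis of_int_0_less_iff of_nat_0_less_iff mult_pos_pos)
  then obtain u where "U = int u" using pos_int_cases by blast
  with tpow_sym_diff[OF U] show thesis by (intro that) simp
qed

end

theorem lemma5p1:
  fixes w L :: "'i::finite \<Rightarrow> 'i \<Rightarrow> rat" and F :: "'i set" and d :: rat and D :: nat
    and a b :: "'i \<Rightarrow> rat"
  assumes w_skew: "\<forall>i j. w i j = - w j i"
    and w_int: "\<forall>i j. (i \<notin> F \<or> j \<notin> F) \<longrightarrow> w i j \<in> \<int>"
    and L_skew: "\<forall>i j. L i j = - L j i"
    and d_pos: "0 < d"
    and L_compat: "\<forall>i \<in> UNIV - F. \<forall>j. (\<Sum>k\<in>UNIV. L j k * omega1 w i k) = d * (if j = i then 1 else 0)"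
    and D_pos: "0 < D"
    and L_D: "\<forall>i j. of_nat D * L i j \<in> \<int>"
    and w_D: "\<forall>i j. of_nat D * w i j \<in> \<int>"
    and a_in: "a \<in> Mplus w F" and b_in: "b \<in> Mplus w F"
  shows "\<exists>q \<in> (kt :: 'k::{comm_ring_1, ring_char_0} fls set).
     q * ((tpow D (d * of_nat (absM w F a)) - tpow D (- d * of_nat (absM w F a)))
          * (tpow D (d * of_nat (absM w F b)) - tpow D (- d * of_nat (absM w F b))))
   = (tpow D (d * of_nat (absM w F (\<lambda>j. a j + b j))) - tpow D (- d * of_nat (absM w F (\<lambda>j. a j + b j))))
     * (tpow D (formM L a b) - tpow D (- formM L a b))"
proof -
  interpret compatible_pair w L F d using d_pos L_compat by unfold_locales
  obtain ca cb where a: "a = omega_comb w F (\<lambda>i. of_nat (ca i))" and ca: "\<exists>i \<in> UNIV - F. ca i \<noteq> 0"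
    and b: "b = omega_comb w F (\<lambda>i. of_nat (cb i))" and cb: "\<exists>i \<in> UNIV - F. cb i \<noteq> 0"
    using a_in b_in by (auto simp: Mplus_eq)
  have ab: "(\<lambda>j. a j + b j) = omega_comb w F (\<lambda>i. of_nat (ca i + cb i))"
    unfolding a b omega_comb_add by simp
  have "\<exists>i \<in> UNIV - F. ca i + cb i \<noteq> 0" using ca by auto
  then have abs_ab: "absM w F (\<lambda>j. a j + b j) = Gcd ((\<lambda>i. ca i + cb i) ` (UNIV - F))"
    unfolding ab by (rule absM_omega_comb)
  have abs_a: "absM w F a = Gcd (ca ` (UNIV - F))"
    unfolding a using ca by (rule absM_omega_comb)
  have abs_b: "absM w F b = Gcd (cb ` (UNIV - F))"
    unfolding b using cb by (rule absM_omega_comb)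
  obtain i where "i \<notin> F" using ca by blast
  obtain u
    where sym_diff: "\<And>k. tpow D (d * of_int k) - tpow D (- d * of_int k)
                             = (fls_X_sym_diff (int u * k) :: 'k fls)"
    using tpow_d_sym_diffE[OF w_int L_D D_pos \<open>i \<notin> F\<close>] by blast
  define l where "l = (\<Sum>j\<in>UNIV - F. \<Sum>i\<in>UNIV - F. int (ca i) * int (cb j) * \<lfloor>w i j\<rfloor>)"
  have "formM L a b = d * of_int l"
    unfolding a b l_def by (rule formM_omega_comb_of_nat[OF w_int])
  then have formM_diff:
    "tpow D (formM L a b) - tpow D (- formM L a b) = (fls_X_sym_diff (int u * l) :: 'k fls)"
    using sym_diff[of l] by (simp only: minus_mult_left)
  have sym_diff_nat:
    "tpow D (d * of_nat n) - tpow D (- d * of_nat n) = (fls_X_sym_diff (int u * int n) :: 'k fls)" for n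
    using sym_diff[of "int n"] by simp
  show ?thesis
    unfolding abs_a abs_b abs_ab sym_diff_nat formM_diff l_def
    by (rule fls_X_sym_diff_quotient[OF gcd_Gcd_dvd_Gcd_add Gcd_mult_dvd_bilinear_sum])
qed

end
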